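(* Let $\alpha\ge1$ and for $n=0,1,\dots$ let $$z_n(x)=L_{1,1+n}^{II,(\alpha)}(x)\frac{e^{-x/2}}{S(x)}=e^{-x/2}\Bigl(-xL_{n-1}^{(\alpha+2)}(x)+\alpha\Bigl(1+\frac{1}{x+\alpha}\Bigr)L_n^{(\alpha+1)}(x)\Bigr),\qquad x\ge0,$$ where $S(x)=-x-\alpha$, and let $c_n$ be the constant with $c_nz_n(0)=1$. Then $\|c_nz_n\|_{\infty,[0,\infty)}=c_nz_n(0)=1$ for all $n=0,1,\dots$.
   Context: $L_n^{(\beta)}$ is the classical Laguerre polynomial, with $L_{-1}^{(\beta)}\equiv0$. $L_{1,1+n}^{II,(\alpha)}$ is the type II exceptional Laguerre polynomial of codimension $1$, with $S(x)=L_1^{(-\alpha-1)}(x)=-x-\alpha$; the displayed explicit expression is taken as the definition of $z_n$. *)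

theory Defs
  imports Complex_Main
begin

definition laguerre :: "nat \<Rightarrow> real \<Rightarrow> real \<Rightarrow> real" where
  "laguerre n b x = (\<Sum>k\<le>n. ((real n + b) gchoose (n - k)) * (- x) ^ k / fact k)"

definition laguerre_pred :: "nat \<Rightarrow> real \<Rightarrow> real \<Rightarrow> real" where
  "laguerre_pred n b x = (if n = 0 then 0 else laguerre (n - 1) b x)"

definition zfun :: "real \<Rightarrow> nat \<Rightarrow> real \<Rightarrow> real" where
  "zfun a n x = exp (- x / 2) *
     (- x * laguerre_pred n (a + 2) x + a * (1 + 1 / (x + a)) * laguerre n (a + 1) x)"

end

(*
  The heart of the matter is the classical bound |exp(-x/2) L_n(x)| <= 1 for x >= 0.  With
  P_{n,m} = disp_poly n m, the series sum_m m! exp(-r^2) P_{n,m}(r)^2 has a telescoping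
  derivative, by the three-term recurrence for P_{n,m}', hence is constant, equal to its value
  1/n! at r = 0.  All its terms are nonnegative, so the term m = n, which is
  exp(-r^2) L_n(r^2)^2 / n!, is at most 1/n!.  For the partial sums the mean value theorem
  bounds the defect by the last flux term, which decays like 1/j!.

  The connection formula L_n^(b) = sum_j binom(b-1+j, j) L_(n-j) has nonnegative coefficients
  for b >= 0 and extends the bound to |exp(-x/2) L_n^(b)(x)| <= L_n^(b)(0).  Finally the
  three-term relations rewrite z_n(x) as
    exp(-x/2) ((n+a+1)(x+a-1) L_n^(a)(x) + (n+1) L_(n+1)^(a)(x)) / (x+a),
  a combination with nonnegative weights for a >= 1, whose value at 0 is the same combination
  of the values L_n^(a)(0), L_(n+1)^(a)(0); hence |z_n(x)| <= z_n(0).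
*)
theory Submission
  imports Defs "HOL-Computational_Algebra.Formal_Power_Series"
begin

definition laguerre_coeff :: "nat \<Rightarrow> real \<Rightarrow> nat \<Rightarrow> real" where
  "laguerre_coeff n b k = (if k \<le> n then ((real n + b) gchoose (n - k)) / fact k else 0)"

lemma laguerre_eq_sum_coeff:
  assumes "n \<le> N"
  shows "laguerre n b x = (\<Sum>k\<le>N. laguerre_coeff n b k * (- x) ^ k)"
proof -
  have "(\<Sum>k\<le>N. laguerre_coeff n b k * (- x) ^ k) = (\<Sum>k\<le>n. laguerre_coeff n b k * (- x) ^ k)"
    by (rule sum.mono_neutral_right) (use assms in \<open>auto simp: laguerre_coeff_def\<close>)
  then show ?thesis
    by (simp add: laguerre_def laguerre_coeff_def)
qed

lemma laguerre_0 [simp]: "laguerre 0 b x = 1"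
  by (simp add: laguerre_def)

lemma laguerre_at_0: "laguerre n b 0 = (real n + b) gchoose n"
proof -
  have "laguerre n b 0 = (\<Sum>k\<le>n. if k = 0 then (real n + b) gchoose n else 0)"
    unfolding laguerre_def by (intro sum.cong refl) (simp add: power_0_left)
  then show ?thesis by simp
qed

lemma laguerre_param_0_at_0: "laguerre n 0 0 = 1"
  by (simp add: laguerre_at_0 binomial_gbinomial[symmetric])

lemma laguerre_Suc_eq_diff:
  "laguerre (Suc n) b x = laguerre (Suc n) (b + 1) x - laguerre n (b + 1) x"
proof -
  have "laguerre_coeff (Suc n) (b + 1) k - laguerre_coeff n (b + 1) k = laguerre_coeff (Suc n) b k"
    if "k \<le> Suc n" for k
  proof (cases "k = Suc n")
    case False
    then have "Suc n - k = Suc (n - k)" "k \<le> n" using that by auto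
    moreover have "(real n + b + 1 + 1) gchoose Suc (n - k) =
        ((real n + b + 1) gchoose (n - k)) + ((real n + b + 1) gchoose Suc (n - k))"
      by (rule gbinomial_Suc_Suc)
    ultimately show ?thesis
      by (simp add: laguerre_coeff_def field_simps)
  qed (simp add: laguerre_coeff_def)
  then show ?thesis
    by (simp add: laguerre_eq_sum_coeff[of "Suc n" "Suc n"] laguerre_eq_sum_coeff[of n "Suc n"]
        sum_subtractf[symmetric] left_diff_distrib[symmetric] del: sum.atMost_Suc)
qed

lemma x_mult_laguerre_Suc_param:
  "x * laguerre n (b + 1) x =
     (real n + b + 1) * laguerre n b x - (real n + 1) * laguerre (Suc n) b x"
proof -
  define c where
    "c k = (real n + b + 1) * laguerre_coeff n b k - (real n + 1) * laguerre_coeff (Suc n) b k" for k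
  have c0: "c 0 = 0"
  proof -
    have "real (Suc n) * ((real n + b + 1) gchoose Suc n) = (real n + b + 1) * ((real n + b) gchoose n)"
      using gbinomial_absorption[of n "real n + b + 1"] by simp
    then show ?thesis by (simp add: c_def laguerre_coeff_def add_ac)
  qed
  have c_Suc: "c (Suc k) = - laguerre_coeff n (b + 1) k" if "k \<le> n" for k
  proof (cases "k = n")
    case True
    have "fact (Suc n) = (real n + 1) * (fact n :: real)" by simp
    with True show ?thesis by (simp add: c_def laguerre_coeff_def add.commute)
  next
    case False
    define m where "m = n - Suc k"
    have m: "n - k = Suc m" using that False by (simp add: m_def)
    define G where "G = (real n + b + 1) gchoose Suc m"
    have coeffs: "laguerre_coeff n b (Suc k) = ((real n + b) gchoose m) / fact (Suc k)"
      "laguerre_coeff (Suc n) b (Suc k) = G / fact (Suc k)"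
      "laguerre_coeff n (b + 1) k = G / fact k"
      using that m by (simp_all add: laguerre_coeff_def m_def G_def add_ac)
    have absorb: "(real n + b + 1) * ((real n + b) gchoose m) = real (Suc m) * G"
      using gbinomial_absorption[of m "real n + b + 1"] by (simp add: G_def)
    have "c (Suc k) = (real (Suc m) - (real n + 1)) * G / fact (Suc k)"
      unfolding c_def coeffs
      by (simp add: absorb diff_divide_distrib left_diff_distrib del: fact_Suc of_nat_Suc)
    also have "real (Suc m) - (real n + 1) = - real (Suc k)"
      using m that by linarith
    also have "- real (Suc k) * G / fact (Suc k) = - G / fact k"
      by (simp add: fact_Suc del: of_nat_Suc)
    finally show ?thesis by (simp add: coeffs)
  qed
  have "(real n + b + 1) * laguerre n b x - (real n + 1) * laguerre (Suc n) b x =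
      (\<Sum>k\<le>Suc n. c k * (- x) ^ k)"
    unfolding laguerre_eq_sum_coeff[of n "Suc n", OF le_SucI[OF order_refl]]
      laguerre_eq_sum_coeff[of "Suc n" "Suc n", OF order_refl]
    by (simp only: c_def sum_distrib_left sum_subtractf[symmetric] left_diff_distrib mult.assoc)
  also have "\<dots> = (\<Sum>k\<le>n. - laguerre_coeff n (b + 1) k * (- x) ^ Suc k)"
    unfolding sum.atMost_Suc_shift by (simp add: c0 c_Suc)
  also have "\<dots> = x * laguerre n (b + 1) x"
    by (simp add: laguerre_eq_sum_coeff[of n n] sum_distrib_left mult_ac)
  finally show ?thesis ..
qed

lemma gbinomial_Vandermonde_upper:
  fixes a b :: "'a :: field_char_0"
  shows "(\<Sum>j=0..N. ((a + of_nat j) gchoose j) * ((b + of_nat (N - j)) gchoose (N - j))) =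
    (a + b + of_nat N + 1) gchoose N"
proof -
  have upper: "(c + of_nat j) gchoose j = (-1) ^ j * ((- c - 1) gchoose j)" for c :: 'a and j
  proof -
    have "(- c - 1) gchoose j = (- (c + 1)) gchoose j"
      by (rule arg_cong[where f = "\<lambda>t. t gchoose j"]) simp
    also have "\<dots> = (-1) ^ j * ((c + of_nat j) gchoose j)"
      by (subst gbinomial_minus) simp
    finally show ?thesis by (simp flip: power_mult_distrib)
  qed
  have "(\<Sum>j=0..N. ((a + of_nat j) gchoose j) * ((b + of_nat (N - j)) gchoose (N - j))) =
      (-1) ^ N * (\<Sum>j=0..N. ((- a - 1) gchoose j) * ((- b - 1) gchoose (N - j)))"
    unfolding sum_distrib_left
  proof (intro sum.cong refl)
    fix j assume "j \<in> {0..N}"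
    then have "(-1) ^ j * (-1) ^ (N - j) = ((-1) ^ N :: 'a)"
      by (simp flip: power_add)
    then show "((a + of_nat j) gchoose j) * ((b + of_nat (N - j)) gchoose (N - j)) =
        (-1) ^ N * (((- a - 1) gchoose j) * ((- b - 1) gchoose (N - j)))"
      unfolding upper[of a] upper[of b] by (simp add: mult_ac)
  qed
  also have "\<dots> = (-1) ^ N * ((- a - 1 + (- b - 1)) gchoose N)"
    by (simp only: gbinomial_Vandermonde)
  also have "- a - 1 + (- b - 1) = - (a + b + 1) - 1"
    by simp
  also have "(-1) ^ N * ((- (a + b + 1) - 1) gchoose N) = (a + b + 1 + of_nat N) gchoose N"
    by (simp only: upper)
  finally show ?thesis
    by (simp add: ac_simps)
qed

lemma laguerre_connection:
  "laguerre n b x = (\<Sum>j\<le>n. ((b - 1 + real j) gchoose j) * laguerre (n - j) 0 x)"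
proof -
  have coeff: "(\<Sum>j\<le>n. ((b - 1 + real j) gchoose j) * laguerre_coeff (n - j) 0 k) = laguerre_coeff n b k"
    if "k \<le> n" for k
  proof -
    define N where "N = n - k"
    have "(\<Sum>j\<le>n. ((b - 1 + real j) gchoose j) * laguerre_coeff (n - j) 0 k)
        = (\<Sum>j=0..N. ((b - 1 + real j) gchoose j) * laguerre_coeff (n - j) 0 k)"
      by (rule sum.mono_neutral_right) (auto simp: N_def laguerre_coeff_def)
    also have "\<dots> = (\<Sum>j=0..N. ((b - 1 + real j) gchoose j) * ((real k + real (N - j)) gchoose (N - j))) / fact k"
      unfolding sum_divide_distrib
    proof (intro sum.cong refl)
      fix j assume "j \<in> {0..N}"
      then have "k \<le> n - j" "n - j - k = N - j" "real (n - j) = real k + real (N - j)"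
        using that by (auto simp: N_def)
      then show "((b - 1 + real j) gchoose j) * laguerre_coeff (n - j) 0 k =
           ((b - 1 + real j) gchoose j) * ((real k + real (N - j)) gchoose (N - j)) / fact k"
        by (simp add: laguerre_coeff_def)
    qed
    also have "\<dots> = ((b - 1 + real k + real N + 1) gchoose N) / fact k"
      by (simp only: gbinomial_Vandermonde_upper)
    also have "b - 1 + real k + real N + 1 = real n + b"
      using that by (simp add: N_def)
    finally show ?thesis
      using that by (simp add: laguerre_coeff_def N_def)
  qed
  have "(\<Sum>j\<le>n. ((b - 1 + real j) gchoose j) * laguerre (n - j) 0 x)
      = (\<Sum>j\<le>n. \<Sum>k\<le>n. ((b - 1 + real j) gchoose j) * laguerre_coeff (n - j) 0 k * (- x) ^ k)"
    by (simp add: laguerre_eq_sum_coeff[of _ n] sum_distrib_left mult.assoc)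
  also have "\<dots> = (\<Sum>k\<le>n. (\<Sum>j\<le>n. ((b - 1 + real j) gchoose j) * laguerre_coeff (n - j) 0 k) * (- x) ^ k)"
    by (subst sum.swap) (simp add: sum_distrib_right)
  also have "\<dots> = laguerre n b x"
    by (simp add: coeff laguerre_eq_sum_coeff[of n n])
  finally show ?thesis ..
qed

(* Extending 1/j! by 0 to negative j makes j * inv_fact j = inv_fact (j - 1) hold for every
   integer j, which removes the boundary cases from the recurrences below. *)
definition inv_fact :: "int \<Rightarrow> real" where
  "inv_fact j = (if j < 0 then 0 else 1 / fact (nat j))"

lemma inv_fact_bounds: "0 \<le> inv_fact j" "inv_fact j \<le> 1"
  by (simp_all add: inv_fact_def)

lemma of_int_mult_inv_fact: "of_int j * inv_fact j = inv_fact (j - 1)"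
proof (cases "j \<le> 0")
  case False
  then have "nat j = Suc (nat (j - 1))" "of_int j = real (Suc (nat (j - 1)))" by auto
  then show ?thesis using False by (simp add: inv_fact_def del: of_nat_Suc)
qed (auto simp: inv_fact_def)

definition disp_coeff :: "nat \<Rightarrow> nat \<Rightarrow> nat \<Rightarrow> real" where
  "disp_coeff n m k = (-1) ^ (n - k) * inv_fact (int m - int k) * inv_fact (int n - int k) / fact k"

lemma disp_coeff_eq_0: "\<not> (k \<le> n \<and> k \<le> m) \<Longrightarrow> disp_coeff n m k = 0"
  by (auto simp: disp_coeff_def inv_fact_def)

lemma disp_coeff_lower_param:
  "of_int (int m - int k) * disp_coeff n m k = (if m = 0 then 0 else disp_coeff n (m - 1) k)"
proof -
  have lower: "of_int (int m - int k) * disp_coeff n m k =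
      (-1) ^ (n - k) * inv_fact (int m - int k - 1) * inv_fact (int n - int k) / fact k"
    unfolding disp_coeff_def of_int_mult_inv_fact[symmetric] by (simp only: mult_ac times_divide_eq_right)
  show ?thesis
  proof (cases "m = 0")
    case True
    then show ?thesis unfolding lower by (simp add: inv_fact_def)
  next
    case False
    then have shift: "int m - int k - 1 = int (m - 1) - int k" by simp
    show ?thesis
      using False by (simp only: lower shift if_False) (simp add: disp_coeff_def)
  qed
qed

lemma disp_coeff_lower_index:
  "of_int (int n - int k) * disp_coeff n m k =
     disp_coeff n m (Suc k) - real (Suc m) * disp_coeff n (Suc m) (Suc k)"
proof (cases "k < n")
  case True
  define I where "I = (of_int (int m - int k) :: real)"
  define P where "P = (of_int (int n - int k) :: real)"
  define A where "A = inv_fact (int m - int k)"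
  define B where "B = inv_fact (int n - int k)"
  have shifted: "inv_fact (int m - int (Suc k)) = I * A" "inv_fact (int n - int (Suc k)) = P * B"
    "inv_fact (int (Suc m) - int (Suc k)) = A"
    unfolding I_def P_def A_def B_def of_int_mult_inv_fact by (simp_all add: algebra_simps)
  have sign: "(-1::real) ^ (n - Suc k) = - ((-1) ^ (n - k))"
    using True by (simp add: Suc_diff_Suc[symmetric])
  have Suc_m: "real (Suc m) = I + real (Suc k)"
    by (simp add: I_def)
  have "P * (s * A * B / F) = - s * (I * A) * (P * B) / (K * F) - (I + K) * (- s * A * (P * B) / (K * F))"
    if "K \<noteq> 0" "F \<noteq> 0" for s K F :: real
    using that by (simp add: field_simps)
  then show ?thesis
    unfolding disp_coeff_def fact_Suc shifted sign Suc_m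
    unfolding I_def[symmetric] P_def[symmetric] A_def[symmetric] B_def[symmetric]
    by simp
next
  case False
  then show ?thesis
    by (cases "k = n") (simp_all add: disp_coeff_eq_0)
qed

lemma disp_coeff_rec:
  "real (m + n - 2 * k) * disp_coeff n m k =
     disp_coeff n m (Suc k) + (if m = 0 then 0 else disp_coeff n (m - 1) k)
       - real (Suc m) * disp_coeff n (Suc m) (Suc k)"
proof -
  have "real (m + n - 2 * k) * disp_coeff n m k =
      (of_int (int m - int k) + of_int (int n - int k)) * disp_coeff n m k"
    by (cases "k \<le> n \<and> k \<le> m") (auto simp: disp_coeff_eq_0 of_nat_diff)
  then show ?thesis
    by (simp only: distrib_right disp_coeff_lower_param disp_coeff_lower_index)
qed

(* For m >= n, disp_poly n m r = r^(m-n) L_n^(m-n)(r^2) / m!; up to normalisation these are the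
   matrix elements <m|D(r)|n> of the displacement operator in the Fock basis. *)
definition disp_poly :: "nat \<Rightarrow> nat \<Rightarrow> real \<Rightarrow> real" where
  "disp_poly n m r = (\<Sum>k\<le>n. disp_coeff n m k * r ^ (m + n - 2 * k))"

lemma mult_disp_poly: "r * disp_poly n m r = (\<Sum>k\<le>n. disp_coeff n m k * r ^ (m + n + 1 - 2 * k))"
  unfolding disp_poly_def sum_distrib_left
proof (intro sum.cong refl)
  fix k
  show "r * (disp_coeff n m k * r ^ (m + n - 2 * k)) = disp_coeff n m k * r ^ (m + n + 1 - 2 * k)"
  proof (cases "k \<le> m \<and> k \<le> n")
    case True
    then have "m + n + 1 - 2 * k = Suc (m + n - 2 * k)" by linarith
    then show ?thesis by simp
  qed (metis disp_coeff_eq_0 mult_zero_left mult_zero_right)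
qed

lemma disp_poly_has_derivative:
  "(disp_poly n m has_field_derivative
     r * disp_poly n m r + (if m = 0 then 0 else disp_poly n (m - 1) r)
       - real (Suc m) * disp_poly n (Suc m) r) (at r)"
proof -
  define g where "g j = disp_coeff n m j - real (Suc m) * disp_coeff n (Suc m) j" for j
  define w where "w k = (if m = 0 then 0 else disp_coeff n (m - 1) k)" for k
  define E where "E j = m + n + 1 - 2 * j" for j
  have "r * disp_poly n m r = (\<Sum>j\<le>n. disp_coeff n m j * r ^ E j)"
    unfolding E_def by (rule mult_disp_poly)
  moreover have "real (Suc m) * disp_poly n (Suc m) r =
      (\<Sum>j\<le>n. real (Suc m) * disp_coeff n (Suc m) j * r ^ E j)"
    unfolding disp_poly_def sum_distrib_left by (simp add: E_def mult.assoc)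
  ultimately have "r * disp_poly n m r - real (Suc m) * disp_poly n (Suc m) r =
      (\<Sum>j\<le>Suc n. g j * r ^ E j)"
    by (simp add: g_def sum_subtractf left_diff_distrib disp_coeff_eq_0)
  also have "\<dots> = (\<Sum>k\<le>n. g (Suc k) * r ^ E (Suc k))"
  proof -
    have "g 0 = 0"
      using of_int_mult_inv_fact[of "int m + 1"] by (simp add: g_def disp_coeff_def add.commute)
    then show ?thesis by (simp add: sum.atMost_Suc_shift del: sum.atMost_Suc)
  qed
  finally have main: "r * disp_poly n m r - real (Suc m) * disp_poly n (Suc m) r =
      (\<Sum>k\<le>n. g (Suc k) * r ^ E (Suc k))" .
  have lower: "(if m = 0 then 0 else disp_poly n (m - 1) r) = (\<Sum>k\<le>n. w k * r ^ E (Suc k))"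
    unfolding disp_poly_def w_def
    by (cases "m = 0") (auto simp: E_def disp_coeff_eq_0 intro!: sum.cong)
  have "r * disp_poly n m r + (if m = 0 then 0 else disp_poly n (m - 1) r)
      - real (Suc m) * disp_poly n (Suc m) r = (\<Sum>k\<le>n. (g (Suc k) + w k) * r ^ E (Suc k))"
    unfolding distrib_right sum.distrib main [symmetric] lower [symmetric] by simp
  moreover have "(\<Sum>k\<le>n. disp_coeff n m k * (real (m + n - 2 * k) * r ^ (m + n - 2 * k - Suc 0))) =
      (\<Sum>k\<le>n. (g (Suc k) + w k) * r ^ E (Suc k))"
  proof (intro sum.cong refl)
    fix k
    have rec: "real (m + n - 2 * k) * disp_coeff n m k = g (Suc k) + w k"
      unfolding g_def w_def disp_coeff_rec by simp
    show "disp_coeff n m k * (real (m + n - 2 * k) * r ^ (m + n - 2 * k - Suc 0)) =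
        (g (Suc k) + w k) * r ^ E (Suc k)"
    proof (cases "m + n - 2 * k = 0")
      case False
      then have "m + n - 2 * k - Suc 0 = E (Suc k)" by (simp add: E_def)
      then show ?thesis by (simp flip: rec)
    qed (use rec in simp)
  qed
  moreover have "(disp_poly n m has_field_derivative
      (\<Sum>k\<le>n. disp_coeff n m k * (real (m + n - 2 * k) * r ^ (m + n - 2 * k - Suc 0)))) (at r)"
    unfolding disp_poly_def [abs_def] by (intro DERIV_sum DERIV_cmult DERIV_pow)
  ultimately show ?thesis
    by (metis DERIV_cong)
qed

definition disp_sq :: "nat \<Rightarrow> nat \<Rightarrow> real \<Rightarrow> real" where
  "disp_sq n m r = exp (- (r ^ 2)) * fact m * (disp_poly n m r) ^ 2"

definition disp_flux :: "nat \<Rightarrow> nat \<Rightarrow> real \<Rightarrow> real" where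
  "disp_flux n m r = (if m = 0 then 0 else fact m * disp_poly n m r * disp_poly n (m - 1) r)"

lemma disp_sq_has_derivative:
  "(disp_sq n m has_field_derivative 2 * exp (- (r ^ 2)) * (disp_flux n m r - disp_flux n (Suc m) r)) (at r)"
proof -
  define D where "D = r * disp_poly n m r + (if m = 0 then 0 else disp_poly n (m - 1) r)
    - real (Suc m) * disp_poly n (Suc m) r"
  have "(disp_sq n m has_field_derivative
      exp (- (r ^ 2)) * (- (2 * r)) * fact m * (disp_poly n m r) ^ 2
        + exp (- (r ^ 2)) * fact m * (2 * disp_poly n m r * D)) (at r)"
    unfolding disp_sq_def D_def
    by (auto intro!: derivative_eq_intros disp_poly_has_derivative simp: power2_eq_square algebra_simps)
  moreover have flux: "fact m * disp_poly n m r * (D - r * disp_poly n m r) =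
      disp_flux n m r - disp_flux n (Suc m) r"
    by (simp add: D_def disp_flux_def fact_Suc algebra_simps)
  ultimately show ?thesis
    by (elim DERIV_cong) (simp add: power2_eq_square algebra_simps flip: flux)
qed

lemma sum_disp_sq_has_derivative:
  "((\<lambda>r. \<Sum>m\<le>M. disp_sq n m r) has_field_derivative - 2 * exp (- (r ^ 2)) * disp_flux n (Suc M) r) (at r)"
proof -
  have "(\<Sum>m\<le>M. disp_flux n m r - disp_flux n (Suc m) r) = - disp_flux n (Suc M) r"
    using sum_telescope[of "\<lambda>m. disp_flux n m r" M] by (simp add: disp_flux_def)
  then have "(\<Sum>m\<le>M. 2 * exp (- (r ^ 2)) * (disp_flux n m r - disp_flux n (Suc m) r)) =
      - 2 * exp (- (r ^ 2)) * disp_flux n (Suc M) r"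
    by (simp flip: sum_distrib_left)
  moreover have "((\<lambda>r. \<Sum>m\<le>M. disp_sq n m r) has_field_derivative
      (\<Sum>m\<le>M. 2 * exp (- (r ^ 2)) * (disp_flux n m r - disp_flux n (Suc m) r))) (at r)"
    by (intro DERIV_sum disp_sq_has_derivative)
  ultimately show ?thesis by simp
qed

lemma disp_poly_at_0: "disp_poly n m 0 = (if m = n then 1 / fact n else 0)"
proof -
  have "disp_coeff n m k * 0 ^ (m + n - 2 * k) = (if m = n \<and> k = n then 1 / fact n else 0)"
    if "k \<le> n" for k
    using that by (cases "k \<le> m") (auto simp: disp_coeff_def inv_fact_def disp_coeff_eq_0)
  then show ?thesis
    by (simp add: disp_poly_def)
qed

lemma sum_disp_sq_at_0:
  assumes "n \<le> M"
  shows "(\<Sum>m\<le>M. disp_sq n m 0) = 1 / fact n"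
proof -
  have "(\<Sum>m\<le>M. disp_sq n m 0) = (\<Sum>m\<le>M. if m = n then 1 / fact n else 0)"
    by (intro sum.cong refl) (simp add: disp_sq_def disp_poly_at_0 power2_eq_square)
  then show ?thesis
    using assms by simp
qed

lemma abs_disp_coeff_le:
  assumes "n \<le> m"
  shows "\<bar>disp_coeff n m k\<bar> \<le> 1 / fact (m - n)"
proof (cases "k \<le> n")
  case True
  have "\<bar>disp_coeff n m k\<bar> = inv_fact (int m - int k) * inv_fact (int n - int k) / fact k"
    by (simp add: disp_coeff_def abs_mult inv_fact_bounds)
  also have "\<dots> \<le> inv_fact (int m - int k) * 1 / 1"
    by (intro frac_le mult_left_mono) (simp_all add: inv_fact_bounds)
  also have "\<dots> = 1 / fact (m - k)"
    using True assms by (simp add: inv_fact_def nat_diff_distrib)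
  also have "\<dots> \<le> 1 / fact (m - n)"
    using True by (intro divide_left_mono fact_mono) auto
  finally show ?thesis .
qed (simp add: disp_coeff_eq_0)

lemma abs_disp_poly_le:
  assumes "n \<le> m" "0 \<le> t" "t \<le> R" "1 \<le> R"
  shows "\<bar>disp_poly n m t\<bar> \<le> real (Suc n) * R ^ (m + n) / fact (m - n)"
proof -
  have "\<bar>disp_poly n m t\<bar> \<le> (\<Sum>k\<le>n. \<bar>disp_coeff n m k\<bar> * \<bar>t\<bar> ^ (m + n - 2 * k))"
    unfolding disp_poly_def by (rule order_trans[OF sum_abs]) (simp add: abs_mult power_abs)
  also have "\<dots> \<le> (\<Sum>k\<le>n. 1 / fact (m - n) * R ^ (m + n))"
  proof (intro sum_mono mult_mono)
    fix k
    have "\<bar>t\<bar> ^ (m + n - 2 * k) \<le> R ^ (m + n - 2 * k)"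
      using assms by (intro power_mono) auto
    also have "\<dots> \<le> R ^ (m + n)"
      using assms by (intro power_increasing) auto
    finally show "\<bar>t\<bar> ^ (m + n - 2 * k) \<le> R ^ (m + n)" .
  qed (use assms abs_disp_coeff_le in auto)
  also have "\<dots> = real (Suc n) * R ^ (m + n) / fact (m - n)"
    by simp
  finally show ?thesis .
qed

lemma fact_add_le: "fact (j + n + 1) \<le> fact n * fact (j + 1) * (2 :: real) ^ (j + n + 1)"
proof -
  have "fact (j + n + 1) / (fact n * fact (j + 1)) = (real ((j + n + 1) choose n))"
    by (simp add: binomial_fact)
  also have "\<dots> \<le> real (2 ^ (j + n + 1))"
    by (simp only: of_nat_le_iff binomial_le_pow2)
  finally show ?thesis
    by (simp add: pos_divide_le_eq ac_simps)
qed

lemma abs_disp_flux_le: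
  assumes "0 \<le> z" "z \<le> R" "1 \<le> R"
  shows "\<bar>disp_flux n (Suc (j + n)) z\<bar> \<le>
    real (Suc n) ^ 2 * fact n * 2 ^ (n + 1) * R ^ (4 * n + 1) * (2 * R ^ 2) ^ j / fact j"
proof -
  have powers: "R ^ (Suc (j + n) + n) * R ^ (j + n + n) = R ^ (4 * n + 1) * (R ^ 2) ^ j"
  proof -
    have "Suc (j + n) + n + (j + n + n) = (4 * n + 1) + 2 * j" by simp
    then show ?thesis by (metis power_add power_mult)
  qed
  have "\<bar>disp_flux n (Suc (j + n)) z\<bar> =
      fact (j + n + 1) * (\<bar>disp_poly n (Suc (j + n)) z\<bar> * \<bar>disp_poly n (j + n) z\<bar>)"
    by (simp add: disp_flux_def abs_mult)
  also have "\<dots> \<le> fact (j + n + 1) *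
      (real (Suc n) * R ^ (Suc (j + n) + n) / fact (j + 1) * (real (Suc n) * R ^ (j + n + n) / fact j))"
    using abs_disp_poly_le[of n "Suc (j + n)" z R] abs_disp_poly_le[of n "j + n" z R] assms
    by (intro mult_left_mono mult_mono) auto
  also have "\<dots> = real (Suc n) ^ 2 * (R ^ (Suc (j + n) + n) * R ^ (j + n + n)) *
      (fact (j + n + 1) / fact (j + 1)) / fact j"
    by (simp only: power2_eq_square times_divide_eq_left times_divide_eq_right divide_divide_eq_left mult_ac)
  also have "\<dots> = real (Suc n) ^ 2 * R ^ (4 * n + 1) * (R ^ 2) ^ j *
      (fact (j + n + 1) / fact (j + 1)) / fact j"
    by (simp only: powers mult.assoc)
  also have "\<dots> \<le> real (Suc n) ^ 2 * R ^ (4 * n + 1) * (R ^ 2) ^ j *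
      (fact n * 2 ^ (j + n + 1)) / fact j"
    using fact_add_le[of j n] assms
    by (intro divide_right_mono mult_left_mono) (simp_all add: divide_le_eq ac_simps)
  also have "\<dots> = real (Suc n) ^ 2 * fact n * 2 ^ (n + 1) * R ^ (4 * n + 1) * (2 * R ^ 2) ^ j / fact j"
    by (simp add: power_add power_mult_distrib)
  finally show ?thesis .
qed

lemma sum_disp_sq_le:
  assumes "0 < r" "r \<le> R" "1 \<le> R"
  shows "(\<Sum>m\<le>j + n. disp_sq n m r) \<le> 1 / fact n +
    r * (2 * (real (Suc n) ^ 2 * fact n * 2 ^ (n + 1) * R ^ (4 * n + 1) * (2 * R ^ 2) ^ j / fact j))"
proof -
  obtain z where z: "0 < z" "z < r" and mvt:
    "(\<Sum>m\<le>j + n. disp_sq n m r) - (\<Sum>m\<le>j + n. disp_sq n m 0) =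
       (r - 0) * (- 2 * exp (- (z ^ 2)) * disp_flux n (Suc (j + n)) z)"
    using MVT2[OF assms(1) sum_disp_sq_has_derivative] by blast
  have "- 2 * exp (- (z ^ 2)) * disp_flux n (Suc (j + n)) z =
      2 * exp (- (z ^ 2)) * (- disp_flux n (Suc (j + n)) z)"
    by simp
  also have "\<dots> \<le> 2 * exp (- (z ^ 2)) * \<bar>disp_flux n (Suc (j + n)) z\<bar>"
    by (intro mult_left_mono) auto
  also have "\<dots> \<le> 2 * \<bar>disp_flux n (Suc (j + n)) z\<bar>"
    by (intro mult_right_mono) auto
  also have "\<dots> \<le> 2 * (real (Suc n) ^ 2 * fact n * 2 ^ (n + 1) * R ^ (4 * n + 1) * (2 * R ^ 2) ^ j / fact j)"
    using abs_disp_flux_le[of z R n j] z assms by simp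
  finally have flux: "- 2 * exp (- (z ^ 2)) * disp_flux n (Suc (j + n)) z \<le>
      2 * (real (Suc n) ^ 2 * fact n * 2 ^ (n + 1) * R ^ (4 * n + 1) * (2 * R ^ 2) ^ j / fact j)" .
  have "(\<Sum>m\<le>j + n. disp_sq n m r) =
      1 / fact n + r * (- 2 * exp (- (z ^ 2)) * disp_flux n (Suc (j + n)) z)"
    using mvt sum_disp_sq_at_0[of n "j + n"] by simp
  also have "\<dots> \<le> 1 / fact n +
      r * (2 * (real (Suc n) ^ 2 * fact n * 2 ^ (n + 1) * R ^ (4 * n + 1) * (2 * R ^ 2) ^ j / fact j))"
    using flux assms by (intro add_left_mono mult_left_mono) auto
  finally show ?thesis .
qed

lemma disp_sq_diag_le:
  assumes "0 < r"
  shows "disp_sq n n r \<le> 1 / fact n"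
proof -
  define R where "R = max 1 r"
  define C where "C = real (Suc n) ^ 2 * fact n * 2 ^ (n + 1) * R ^ (4 * n + 1)"
  have "disp_sq n n r \<le> 1 / fact n + r * (2 * (C * ((2 * R ^ 2) ^ j / fact j)))" for j
  proof -
    have "disp_sq n n r \<le> (\<Sum>m\<le>j + n. disp_sq n m r)"
      by (intro member_le_sum) (auto simp: disp_sq_def)
    also have "\<dots> \<le> 1 / fact n + r * (2 * (C * ((2 * R ^ 2) ^ j / fact j)))"
      using sum_disp_sq_le[OF assms, where R = R and j = j and n = n] by (simp add: C_def R_def)
    finally show ?thesis .
  qed
  moreover have "(\<lambda>j. (2 * R ^ 2) ^ j / fact j) \<longlonglongrightarrow> 0"
    using summable_LIMSEQ_zero[OF summable_exp[of "2 * R ^ 2"]] by (simp add: inverse_eq_divide mult.commute)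
  then have "(\<lambda>j. 1 / fact n + r * (2 * (C * ((2 * R ^ 2) ^ j / fact j)))) \<longlonglongrightarrow> 1 / fact n + r * (2 * (C * 0))"
    by (intro tendsto_intros)
  ultimately show ?thesis
    by (intro LIMSEQ_le_const) auto
qed

lemma laguerre_eq_disp_poly: "laguerre n 0 (r ^ 2) = fact n * disp_poly n n r"
proof -
  have "laguerre n 0 (r ^ 2) = (\<Sum>k\<le>n. (real n gchoose (n - k)) * (- (r ^ 2)) ^ k / fact k)"
    by (simp add: laguerre_def)
  also have "\<dots> = (\<Sum>k\<le>n. (real n gchoose k) * (- (r ^ 2)) ^ (n - k) / fact (n - k))"
    by (rule sum.reindex_bij_witness[where i = "\<lambda>k. n - k" and j = "\<lambda>k. n - k"]) auto
  also have "\<dots> = (\<Sum>k\<le>n. fact n * (disp_coeff n n k * r ^ (n + n - 2 * k)))"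
  proof (intro sum.cong refl)
    fix k assume "k \<in> {..n}"
    then have k: "k \<le> n" by simp
    have binom: "real n gchoose k = fact n / (fact k * fact (n - k))"
      using k by (simp add: binomial_gbinomial[symmetric] binomial_fact)
    have power: "(- (r ^ 2)) ^ (n - k) = (-1) ^ (n - k) * r ^ (n + n - 2 * k)"
    proof -
      have "n + n - 2 * k = 2 * (n - k)" using k by simp
      then show ?thesis by (subst power_minus) (simp add: power_mult)
    qed
    have coeff: "disp_coeff n n k = (-1) ^ (n - k) / (fact (n - k) * fact (n - k) * fact k)"
      using k by (simp add: disp_coeff_def inv_fact_def nat_diff_distrib)
    show "(real n gchoose k) * (- (r ^ 2)) ^ (n - k) / fact (n - k) =
        fact n * (disp_coeff n n k * r ^ (n + n - 2 * k))"
      unfolding binom power coeff by (simp add: field_simps)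
  qed
  also have "\<dots> = fact n * disp_poly n n r"
    by (simp add: disp_poly_def sum_distrib_left)
  finally show ?thesis .
qed

lemma abs_exp_laguerre_param_0_le:
  assumes "0 \<le> x"
  shows "\<bar>exp (- x / 2) * laguerre n 0 x\<bar> \<le> 1"
proof (cases "x = 0")
  case False
  define r where "r = sqrt x"
  have r: "0 < r" "x = r ^ 2"
    using assms False by (simp_all add: r_def)
  have "(exp (- x / 2))\<^sup>2 = exp (- (r ^ 2))"
    by (simp add: r(2) power2_eq_square flip: exp_add)
  then have "(exp (- x / 2) * laguerre n 0 x)\<^sup>2 = exp (- (r ^ 2)) * (fact n * disp_poly n n r)\<^sup>2"
    by (simp only: r(2) power_mult_distrib laguerre_eq_disp_poly)
  also have "\<dots> = fact n * disp_sq n n r"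
    by (simp add: disp_sq_def power2_eq_square)
  also have "\<dots> \<le> fact n * (1 / fact n)"
    using disp_sq_diag_le[OF r(1)] by (intro mult_left_mono) auto
  finally show ?thesis
    by (simp add: abs_square_le_1)
qed (simp add: laguerre_param_0_at_0)

lemma abs_exp_laguerre_le:
  assumes "0 \<le> b" "0 \<le> x"
  shows "\<bar>exp (- x / 2) * laguerre n b x\<bar> \<le> laguerre n b 0"
proof -
  have nonneg: "0 \<le> (b - 1 + real j) gchoose j" for j
  proof -
    have "0 \<le> pochhammer b j"
      using assms(1) pochhammer_nonneg[of b j] by (cases "b = 0") (auto simp: pochhammer_0_left)
    then show ?thesis
      by (simp add: gbinomial_pochhammer')
  qed
  have "\<bar>exp (- x / 2) * laguerre n b x\<bar> \<le>
      (\<Sum>j\<le>n. ((b - 1 + real j) gchoose j) * \<bar>exp (- x / 2) * laguerre (n - j) 0 x\<bar>)"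
    unfolding laguerre_connection[of n b x] sum_distrib_left
    by (rule order_trans[OF sum_abs]) (simp add: abs_mult nonneg mult_ac)
  also have "\<dots> \<le> (\<Sum>j\<le>n. ((b - 1 + real j) gchoose j) * laguerre (n - j) 0 0)"
    using abs_exp_laguerre_param_0_le[OF assms(2)]
    by (intro sum_mono mult_left_mono) (simp_all add: laguerre_param_0_at_0 nonneg)
  also have "\<dots> = laguerre n b 0"
    by (rule laguerre_connection[symmetric])
  finally show ?thesis .
qed

lemma x_mult_laguerre_pred:
  "x * laguerre_pred n (a + 2) x = (a + 1) * laguerre n (a + 1) x - (real n + a + 1) * laguerre n a x"
proof (cases n)
  case (Suc m)
  have "x * laguerre m (a + 1 + 1) x =
      (real m + (a + 1) + 1) * laguerre m (a + 1) x - (real m + 1) * laguerre (Suc m) (a + 1) x"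
    by (rule x_mult_laguerre_Suc_param)
  then show ?thesis
    unfolding Suc laguerre_Suc_eq_diff[of m a] by (simp add: laguerre_pred_def algebra_simps)
qed (simp add: laguerre_pred_def)

lemma zfun_eq:
  assumes "x + a \<noteq> 0"
  shows "zfun a n x = exp (- x / 2) *
    (((real n + a + 1) * (x + a - 1) * laguerre n a x + (real n + 1) * laguerre (Suc n) a x) / (x + a))"
proof -
  define A where "A = laguerre n a x"
  define B where "B = laguerre n (a + 1) x"
  define C where "C = laguerre (Suc n) a x"
  define D where "D = laguerre_pred n (a + 2) x"
  have xD: "x * D = (a + 1) * B - (real n + a + 1) * A"
    unfolding A_def B_def D_def by (rule x_mult_laguerre_pred)
  have xB: "x * B = (real n + a + 1) * A - (real n + 1) * C"
    unfolding A_def B_def C_def by (rule x_mult_laguerre_Suc_param)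
  have "(- x * D + a * (1 + 1 / (x + a)) * B) * (x + a) = - (x + a) * (x * D) + a * (x * B) + a * (a + 1) * B"
    using assms by (simp add: field_simps)
  also have "\<dots> = (x + a) * (real n + a + 1) * A - x * B"
    unfolding xD by (simp add: algebra_simps)
  also have "\<dots> = (real n + a + 1) * (x + a - 1) * A + (real n + 1) * C"
    unfolding xB by (simp add: algebra_simps)
  finally have "- x * D + a * (1 + 1 / (x + a)) * B = ((real n + a + 1) * (x + a - 1) * A + (real n + 1) * C) / (x + a)"
    using assms by (simp add: eq_divide_eq)
  then show ?thesis
    by (simp add: zfun_def A_def B_def C_def D_def)
qed

lemma abs_zfun_le_zfun_0:
  assumes "0 \<le> x" "1 \<le> a"
  shows "\<bar>zfun a n x\<bar> \<le> zfun a n 0"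
proof -
  define K where "K = real n + a + 1"
  define A0 where "A0 = laguerre n a 0"
  define C0 where "C0 = laguerre (Suc n) a 0"
  have K: "0 < K" and xa: "0 < x + a" "0 \<le> x + a - 1"
    using assms by (auto simp: K_def)
  have C0: "(real n + 1) * C0 = K * A0"
    using gbinomial_absorption[of n "real (Suc n) + a"]
    by (simp add: C0_def A0_def K_def laguerre_at_0 algebra_simps)
  have zfun_0: "zfun a n 0 = K * A0"
  proof -
    have "zfun a n 0 = (K * (a - 1) * A0 + K * A0) / a"
      using zfun_eq[of 0 a n] assms C0 by (simp add: K_def A0_def C0_def)
    also have "\<dots> = K * A0"
      using assms by (simp add: field_simps)
    finally show ?thesis .
  qed
  have "\<bar>zfun a n x\<bar> = \<bar>K * (x + a - 1) * (exp (- x / 2) * laguerre n a x)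
       + (real n + 1) * (exp (- x / 2) * laguerre (Suc n) a x)\<bar> / (x + a)"
    using xa by (simp add: zfun_eq K_def abs_mult abs_divide algebra_simps)
  also have "\<dots> \<le> (K * (x + a - 1) * A0 + (real n + 1) * C0) / (x + a)"
  proof (intro divide_right_mono order_trans[OF abs_triangle_ineq] add_mono)
    show "\<bar>K * (x + a - 1) * (exp (- x / 2) * laguerre n a x)\<bar> \<le> K * (x + a - 1) * A0"
      using K xa abs_exp_laguerre_le[of a x n] assms
      by (simp add: abs_mult A0_def mult_left_mono)
    show "\<bar>(real n + 1) * (exp (- x / 2) * laguerre (Suc n) a x)\<bar> \<le> (real n + 1) * C0"
      using abs_exp_laguerre_le[of a x "Suc n"] assms
      by (simp add: abs_mult C0_def mult_left_mono)
  qed (use xa in simp)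
  also have "\<dots> = K * A0"
    using C0 xa by (simp add: field_simps)
  finally show ?thesis
    using zfun_0 by simp
qed

theorem lemma4:
  fixes \<alpha> :: real and n :: nat and c :: real
  assumes "\<alpha> \<ge> 1"
    and "c * zfun \<alpha> n 0 = 1"
  shows "(\<forall>x\<ge>0. \<bar>c * zfun \<alpha> n x\<bar> \<le> 1)
      \<and> (SUP x\<in>{0..}. \<bar>c * zfun \<alpha> n x\<bar>) = 1
      \<and> c * zfun \<alpha> n 0 = 1"
proof -
  have "0 \<le> zfun \<alpha> n 0"
    using abs_zfun_le_zfun_0[of 0 \<alpha> n] assms(1) by simp
  then have "\<bar>c\<bar> * zfun \<alpha> n 0 = 1"
    using assms(2) by (metis abs_1 abs_mult abs_of_nonneg)
  then have bound: "\<bar>c * zfun \<alpha> n x\<bar> \<le> 1" if "0 \<le> x" for x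
    using abs_zfun_le_zfun_0[OF that assms(1)] by (metis abs_ge_zero abs_mult mult_left_mono)
  have "(SUP x\<in>{0..}. \<bar>c * zfun \<alpha> n x\<bar>) = 1"
    using assms(2) bound by (intro cSup_eq_maximum) force+
  with bound assms(2) show ?thesis
    by blast
qed

end
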